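(* (i) Let $\alpha>\frac d2$. Then there exists $c>0$ such that, for any sufficiently large $A>0$, uniformly in $N\in\mathbb{N}$, \begin{align*} \Big|\int_{\mathbb{T}^d}(Y_N^\alpha)^3\Theta_N^\alpha\,dx\Big|&\le c\|Y_N^\alpha\|_{L^\infty}^6+\tfrac1{100}\|\Theta_N^\alpha\|_{L^2}^2,\\ \Big|\int_{\mathbb{T}^d}(Y_N^\alpha)^2(\Theta_N^\alpha)^2\,dx\Big|&\le c\|Y_N^\alpha\|_{L^\infty}^4+\tfrac1{100}\|\Theta_N^\alpha\|_{L^2}^4,\\ \Big|\int_{\mathbb{T}^d}Y_N^\alpha(\Theta_N^\alpha)^3\,dx\Big|&\le c\|Y_N^\alpha\|_{L^\infty}^4+\tfrac1{100}\|\Theta_N^\alpha\|_{L^4}^4,\\ \Big|\int_{\mathbb{T}^d}(\Theta_N^\alpha)^4\,dx\Big|&\le\tfrac1{100}\|\Theta_N^\alpha\|_{H^\alpha}^2+\tfrac{A}{100}\|\Theta_N^\alpha\|_{L^2}^{\frac{8\alpha-2d}{2\alpha-d}}. \end{align*} (ii) Let $A,\gamma>0$. Then there exists $c=c(A,\gamma)>0$ such that, uniformly in $N\in\mathbb{N}$, \[ A\Big\{\int_{\mathbb{T}^d}(Y_N^\alpha+\Theta_N^\alpha)^2dx\Big\}^\gamma\ge\frac A4\|\Theta_N^\alpha\|_{L^2}^{2\gamma}-c\|Y_N^\alpha\|_{L^\infty}^{2\gamma}. \]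
   Context: $\mathbb{T}^d=(\mathbb{R}/2\pi\mathbb{Z})^d$ with normalized Lebesgue measure; $e_n(x)=e^{in\cdot x}$, $\langle n\rangle=(1+|n|^2)^{1/2}$, $\langle\nabla\rangle=(1-\Delta)^{1/2}$, $\pi_Nf=\sum_{|n|\le N}\widehat f(n)e_n$, $\|f\|_{H^s}=\|\langle\nabla\rangle^sf\|_{L^2}$. $\{B_n\}$ are independent complex Brownian motions (modulo $B_{-n}=\overline{B_n}$) with $\mathrm{Var}(B_n(t))=t$, $B_0$ real; $W(t)=\sum_nB_n(t)e_n$, $Y^\alpha(t)=\langle\nabla\rangle^{-\alpha}W(t)$, $Y_N^\alpha=\pi_NY^\alpha(1)$. $\mathbb{H}_a$ is the space of progressively measurable processes belonging to $L^2([0,1];L^2(\mathbb{T}^d))$ almost surely; for $\theta\in\mathbb{H}_a$, $I^\alpha(\theta)(t)=\int_0^t\langle\nabla\rangle^{-\alpha}\theta(t')dt'$ and $\Theta_N^\alpha=\pi_NI^\alpha(\theta)(1)$. *)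

theory Defs
  imports "HOL-Analysis.Analysis"
begin

text \<open>The torus T^d is represented by the fundamental box [0,2pi]^d in real^'d,
  with normalized Lebesgue measure; d = CARD('d). Frequencies n live in int^'d.\<close>

definition torus_box :: "(real ^ 'd::finite) set" where
  "torus_box = {x. \<forall>i. 0 \<le> x $ i \<and> x $ i \<le> 2 * pi}"

definition torus_int :: "((real ^ 'd::finite) \<Rightarrow> 'b::{banach,second_countable_topology}) \<Rightarrow> 'b" where
  "torus_int f = (1 / (2 * pi) ^ CARD('d)) *\<^sub>R set_lebesgue_integral lborel torus_box f"

definition dotp :: "int ^ 'd::finite \<Rightarrow> real ^ 'd \<Rightarrow> real" where
  "dotp n x = (\<Sum>i\<in>UNIV. real_of_int (n $ i) * x $ i)"

definition jbr :: "int ^ 'd::finite \<Rightarrow> real" where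
  "jbr n = sqrt (1 + (\<Sum>i\<in>UNIV. (real_of_int (n $ i))\<^sup>2))"

definition freq_ball :: "nat \<Rightarrow> (int ^ 'd::finite) set" where
  "freq_ball N = {n. (\<Sum>i\<in>UNIV. (n $ i)\<^sup>2) \<le> (int N)\<^sup>2}"

definition en :: "int ^ 'd::finite \<Rightarrow> real ^ 'd \<Rightarrow> complex" where
  "en n x = cis (dotp n x)"

definition fourier_coeff :: "((real ^ 'd::finite) \<Rightarrow> real) \<Rightarrow> int ^ 'd \<Rightarrow> complex" where
  "fourier_coeff f n = torus_int (\<lambda>x. complex_of_real (f x) * cnj (en n x))"

text \<open>Trigonometric polynomial sum_{|n|<=N} c(n) e_n, as a real-valued function
  (the coefficient families used are Hermitian, so the sum is real)\<close>
definition trig_poly :: "nat \<Rightarrow> (int ^ 'd::finite \<Rightarrow> complex) \<Rightarrow> real ^ 'd \<Rightarrow> real" where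
  "trig_poly N c x = Re (\<Sum>n\<in>freq_ball N. c n * en n x)"

definition hermitian :: "(int ^ 'd::finite \<Rightarrow> complex) \<Rightarrow> bool" where
  "hermitian c \<longleftrightarrow> (\<forall>n. c (- n) = cnj (c n))"

definition bessel_pot :: "real \<Rightarrow> (int ^ 'd::finite \<Rightarrow> complex) \<Rightarrow> int ^ 'd \<Rightarrow> complex" where
  "bessel_pot s c n = complex_of_real (jbr n powr s) * c n"

definition Lp_norm :: "real \<Rightarrow> ((real ^ 'd::finite) \<Rightarrow> real) \<Rightarrow> real" where
  "Lp_norm p f = (torus_int (\<lambda>x. \<bar>f x\<bar> powr p)) powr (1 / p)"

text \<open>L^infinity norm; used only for trigonometric polynomials (continuous), where
  the essential supremum equals the supremum\<close>
definition Linf_norm :: "((real ^ 'd::finite) \<Rightarrow> real) \<Rightarrow> real" where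
  "Linf_norm f = (SUP x\<in>torus_box. \<bar>f x\<bar>)"

definition Hs_norm_tp :: "real \<Rightarrow> nat \<Rightarrow> (int ^ 'd::finite \<Rightarrow> complex) \<Rightarrow> real" where
  "Hs_norm_tp s N c = Lp_norm 2 (trig_poly N (bessel_pot s c))"

text \<open>Y_N^alpha = pi_N <nabla>^{-alpha} W(1), pathwise: b n = B_n(1)(omega)\<close>
definition Y_N :: "real \<Rightarrow> nat \<Rightarrow> (int ^ 'd::finite \<Rightarrow> complex) \<Rightarrow> real ^ 'd \<Rightarrow> real" where
  "Y_N \<alpha> N b = trig_poly N (bessel_pot (- \<alpha>) b)"

definition drift_coeff :: "(real \<Rightarrow> (real ^ 'd::finite) \<Rightarrow> real) \<Rightarrow> int ^ 'd \<Rightarrow> complex" where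
  "drift_coeff \<theta> n = set_lebesgue_integral lborel {0..1} (\<lambda>t. fourier_coeff (\<theta> t) n)"

text \<open>Fourier coefficients of Theta_N^alpha = pi_N I^alpha(theta)(1)\<close>
definition Theta_coeff :: "real \<Rightarrow> (real \<Rightarrow> (real ^ 'd::finite) \<Rightarrow> real) \<Rightarrow> int ^ 'd \<Rightarrow> complex" where
  "Theta_coeff \<alpha> \<theta> = bessel_pot (- \<alpha>) (drift_coeff \<theta>)"

definition Theta_N :: "real \<Rightarrow> nat \<Rightarrow> (real \<Rightarrow> (real ^ 'd::finite) \<Rightarrow> real) \<Rightarrow> real ^ 'd \<Rightarrow> real" where
  "Theta_N \<alpha> N \<theta> = trig_poly N (Theta_coeff \<alpha> \<theta>)"

text \<open>sample path of a process in H_a: theta in L^2([0,1] x T^d)\<close>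
definition drift_path :: "(real \<Rightarrow> (real ^ 'd::finite) \<Rightarrow> real) \<Rightarrow> bool" where
  "drift_path \<theta> \<longleftrightarrow> (\<lambda>(t, x). \<theta> t x) \<in> borel_measurable (lborel :: (real \<times> (real ^ 'd)) measure)
     \<and> set_integrable (lborel :: (real \<times> (real ^ 'd)) measure) ({0..1} \<times> torus_box) (\<lambda>(t, x). (\<theta> t x)\<^sup>2)"

end

theory Submission
  imports Defs
begin

(* The first three estimates of (i) and the estimate (ii) are pointwise Young inequalities,
   integrated using |Y| <= ||Y||_inf on the torus.

   The quartic estimate is a Gagliardo-Nirenberg inequality for trigonometric polynomials.
   ||Theta||_inf is at most the l^1 norm of the Fourier coefficients, and Cauchy-Schwarz with the
   weight 1 + lam <n>^(2 alpha) bounds its square by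
   (||Theta||_2^2 + lam ||Theta||_(H^alpha)^2) * sum_n 1 / (1 + lam <n>^(2 alpha)).
   Since 2 alpha > d the lattice sum is O(lam^(-d / (2 alpha))); choosing
   lam = ||Theta||_2^2 / ||Theta||_(H^alpha)^2 gives
   ||Theta||_inf^2 <= C ||Theta||_2^(2 (1 - theta)) ||Theta||_(H^alpha)^(2 theta), theta = d / (2 alpha).
   Then int Theta^4 <= ||Theta||_inf^2 ||Theta||_2^2, and Young's inequality with exponents
   1 / theta and 1 / (1 - theta) separates the two norms. *)

section \<open>Integration over the torus\<close>

lemma integral_lborel_prod_Basis:
  fixes f :: "'a::euclidean_space \<Rightarrow> real \<Rightarrow> 'b::{real_normed_field,banach,second_countable_topology}"
  assumes int: "\<And>b. b \<in> Basis \<Longrightarrow> integrable lborel (f b)"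
  shows "(\<integral>x. (\<Prod>b\<in>Basis. f b (x \<bullet> b)) \<partial>(lborel::'a measure)) = (\<Prod>b\<in>Basis. (\<integral>x. f b x \<partial>lborel))"
proof -
  interpret product_sigma_finite "\<lambda>_::'a. lborel::real measure"
    by unfold_locales
  have meas: "(\<lambda>x::'a. f b (x \<bullet> b)) \<in> borel_measurable borel" if "b \<in> Basis" for b
    using int[OF that] by (intro measurable_compose[OF _ borel_measurable_integrable]) auto
  have coord: "(\<Sum>c\<in>Basis. g c *\<^sub>R c) \<bullet> b = g b" if "b \<in> Basis" for g :: "'a \<Rightarrow> real" and b
    using that by (simp add: inner_sum_left inner_Basis if_distrib sum.delta cong: if_cong)
  have "(\<integral>x. (\<Prod>b\<in>Basis. f b (x \<bullet> b)) \<partial>(lborel::'a measure))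
     = (\<integral>g. (\<Prod>b\<in>Basis. f b ((\<Sum>c\<in>Basis. g c *\<^sub>R c) \<bullet> b)) \<partial>(\<Pi>\<^sub>M b\<in>Basis. lborel))"
    by (subst lborel_eq, subst integral_distr) (auto intro!: borel_measurable_prod meas)
  also have "\<dots> = (\<integral>g. (\<Prod>b\<in>Basis. f b (g b)) \<partial>(\<Pi>\<^sub>M b\<in>Basis. lborel))"
    by (simp add: coord cong: prod.cong)
  also have "\<dots> = (\<Prod>b\<in>Basis. (\<integral>x. f b x \<partial>lborel))"
    by (rule product_integral_prod) (auto intro: int)
  finally show ?thesis .
qed

lemma prod_Basis_vec:
  "(\<Prod>b\<in>(Basis :: (real ^ 'd::finite) set). F b) = (\<Prod>i\<in>UNIV. F (axis i 1))"
proof -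
  have "(Basis :: (real ^ 'd) set) = (\<lambda>i. axis i 1) ` UNIV"
    unfolding Basis_vec_def by auto
  moreover have "inj (\<lambda>i::'d. axis i (1::real))"
    by (auto simp: inj_def axis_eq_axis)
  ultimately show ?thesis
    by (simp add: prod.reindex_cong[of "\<lambda>i. axis i 1"])
qed

lemma integral_lborel_prod_vec:
  fixes f :: "'d::finite \<Rightarrow> real \<Rightarrow> 'b::{real_normed_field,banach,second_countable_topology}"
  assumes int: "\<And>i. integrable lborel (f i)"
  shows "(\<integral>x. (\<Prod>i\<in>UNIV. f i (x $ i)) \<partial>(lborel::(real^'d) measure)) = (\<Prod>i\<in>UNIV. (\<integral>x. f i x \<partial>lborel))"
proof -
  define F where "F b = f (THE i. b = axis i 1)" for b :: "real^'d"
  have F: "F (axis i 1) = f i" for i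
    unfolding F_def by (rule arg_cong[where f=f], rule the_equality) (auto simp: axis_eq_axis)
  have "(\<integral>x. (\<Prod>i\<in>UNIV. f i (x $ i)) \<partial>(lborel::(real^'d) measure))
      = (\<integral>x. (\<Prod>b\<in>Basis. F b (x \<bullet> b)) \<partial>(lborel::(real^'d) measure))"
    by (simp add: prod_Basis_vec F inner_axis)
  also have "\<dots> = (\<Prod>b\<in>(Basis::(real^'d) set). (\<integral>x. F b x \<partial>lborel))"
    by (rule integral_lborel_prod_Basis) (auto simp: Basis_vec_def F int)
  also have "\<dots> = (\<Prod>i\<in>UNIV. (\<integral>x. f i x \<partial>lborel))"
    by (simp add: prod_Basis_vec F)
  finally show ?thesis .
qed

lemma set_integral_torus_box_prod:
  fixes f :: "'d::finite \<Rightarrow> real \<Rightarrow> 'b::{real_normed_field,banach,second_countable_topology}"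
  assumes int: "\<And>i. set_integrable lborel {0..2*pi} (f i)"
  shows "set_lebesgue_integral lborel (torus_box :: (real^'d) set) (\<lambda>x. \<Prod>i\<in>UNIV. f i (x $ i))
     = (\<Prod>i\<in>UNIV. set_lebesgue_integral lborel {0..2*pi} (f i))"
proof -
  have "indicator torus_box x = (\<Prod>i\<in>UNIV. indicator {0..2*pi} (x $ i) :: real)" for x :: "real^'d"
    unfolding torus_box_def indicator_def by (auto simp: prod.neutral)
  then have "set_lebesgue_integral lborel (torus_box :: (real^'d) set) (\<lambda>x. \<Prod>i\<in>UNIV. f i (x $ i))
      = (\<integral>x. (\<Prod>i\<in>UNIV. indicator {0..2*pi} (x $ i) *\<^sub>R f i (x $ i)) \<partial>(lborel::(real^'d) measure))"
    unfolding set_lebesgue_integral_def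
    by (simp add: scaleR_conv_of_real prod.distrib of_real_prod)
  also have "\<dots> = (\<Prod>i\<in>UNIV. set_lebesgue_integral lborel {0..2*pi} (f i))"
    unfolding set_lebesgue_integral_def
    by (rule integral_lborel_prod_vec) (use int in \<open>auto simp: set_integrable_def\<close>)
  finally show ?thesis .
qed

lemma torus_box_eq_cbox: "(torus_box :: (real^'d::finite) set) = cbox 0 (vec (2*pi))"
  unfolding torus_box_def by (auto simp: mem_box_cart)

lemma compact_torus_box: "compact (torus_box :: (real^'d::finite) set)"
  unfolding torus_box_eq_cbox by (rule compact_cbox)

lemma set_integrable_torus_box:
  fixes f :: "real^'d::finite \<Rightarrow> 'b::{banach,second_countable_topology}"
  assumes "continuous_on UNIV f"
  shows "set_integrable lborel torus_box f"
  unfolding set_integrable_def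
  using compact_torus_box by (rule borel_integrable_compact) (rule continuous_on_subset[OF assms], simp)

lemma torus_int_sum:
  fixes f :: "'i \<Rightarrow> real^'d::finite \<Rightarrow> 'b::{banach,second_countable_topology}"
  assumes "finite I" "\<And>i. i \<in> I \<Longrightarrow> continuous_on UNIV (f i)"
  shows "torus_int (\<lambda>x. \<Sum>i\<in>I. f i x) = (\<Sum>i\<in>I. torus_int (f i))"
proof -
  have "(\<lambda>x. indicator torus_box x *\<^sub>R (\<Sum>i\<in>I. f i x)) = (\<lambda>x. \<Sum>i\<in>I. indicator torus_box x *\<^sub>R f i x)"
    by (simp add: scaleR_sum_right)
  then have "set_lebesgue_integral lborel torus_box (\<lambda>x. \<Sum>i\<in>I. f i x)
      = (\<Sum>i\<in>I. set_lebesgue_integral lborel torus_box (f i))"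
    using assms unfolding set_lebesgue_integral_def
    by (simp only:) (rule Bochner_Integration.integral_sum,
        auto intro!: set_integrable_torus_box[unfolded set_integrable_def])
  then show ?thesis
    unfolding torus_int_def by (simp add: scaleR_sum_right)
qed

lemma torus_int_mult_left:
  fixes f :: "real^'d::finite \<Rightarrow> 'b::{real_normed_field,banach,second_countable_topology}"
  shows "torus_int (\<lambda>x. c * f x) = c * torus_int f"
  unfolding torus_int_def by simp

lemma torus_int_of_real:
  fixes f :: "real^'d::finite \<Rightarrow> real"
  shows "torus_int (\<lambda>x. complex_of_real (f x)) = complex_of_real (torus_int f)"
  unfolding torus_int_def set_integral_complex_of_real
  by (simp add: scaleR_conv_of_real)

lemma torus_int_add:
  fixes f g :: "real^'d::finite \<Rightarrow> real"
  assumes "continuous_on UNIV f" "continuous_on UNIV g"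
  shows "torus_int (\<lambda>x. f x + g x) = torus_int f + torus_int g"
  unfolding torus_int_def
  by (subst set_integral_add) (auto intro!: set_integrable_torus_box assms simp: add_divide_distrib)

lemma torus_int_mono:
  fixes f g :: "real^'d::finite \<Rightarrow> real"
  assumes "continuous_on UNIV f" "continuous_on UNIV g" "\<And>x. x \<in> torus_box \<Longrightarrow> f x \<le> g x"
  shows "torus_int f \<le> torus_int g"
  unfolding torus_int_def
  by (auto intro!: divide_right_mono set_integral_mono set_integrable_torus_box assms)

lemma torus_int_abs_le:
  fixes f g :: "real^'d::finite \<Rightarrow> real"
  assumes "continuous_on UNIV f" "continuous_on UNIV g" "\<And>x. x \<in> torus_box \<Longrightarrow> \<bar>f x\<bar> \<le> g x"
  shows "\<bar>torus_int f\<bar> \<le> torus_int g"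
proof -
  have "torus_int f \<le> torus_int g"
    by (rule torus_int_mono) (use assms in \<open>auto dest: abs_le_D1\<close>)
  moreover have "torus_int (\<lambda>x. (-1) * f x) \<le> torus_int g"
    by (rule torus_int_mono) (use assms in \<open>auto intro!: continuous_intros dest: abs_le_D2\<close>)
  ultimately show ?thesis
    unfolding torus_int_mult_left by linarith
qed

lemma torus_int_const: "torus_int (\<lambda>x::real^'d::finite. c) = (c::real)"
proof -
  have "vec (2*pi) \<bullet> b \<ge> 0" if "b \<in> Basis" for b :: "real^'d"
    using that by (auto simp: Basis_vec_def inner_axis)
  then have "measure lborel (torus_box :: (real^'d) set) = (2*pi) ^ CARD('d)"
    unfolding torus_box_eq_cbox measure_lborel_cbox_eq
    by (simp add: prod_Basis_vec inner_axis)
  moreover have "set_lebesgue_integral lborel (torus_box :: (real^'d) set) (\<lambda>_. c)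
      = measure lborel (torus_box :: (real^'d) set) *\<^sub>R c"
    using emeasure_compact_finite[OF compact_torus_box[where 'd='d]]
    by (intro set_integral_const) (auto simp: torus_box_eq_cbox)
  ultimately show ?thesis
    unfolding torus_int_def by simp
qed

lemma torus_int_nonneg:
  fixes f :: "real^'d::finite \<Rightarrow> real"
  assumes "continuous_on UNIV f" "\<And>x. x \<in> torus_box \<Longrightarrow> 0 \<le> f x"
  shows "0 \<le> torus_int f"
  using torus_int_mono[of "\<lambda>_. 0" f] assms by (simp add: torus_int_const)

lemma torus_int_affine:
  fixes f :: "real^'d::finite \<Rightarrow> real"
  assumes "continuous_on UNIV f"
  shows "torus_int (\<lambda>x. a + b * f x) = a + b * torus_int f"
  by (subst torus_int_add) (auto intro!: continuous_intros assms simp: torus_int_const torus_int_mult_left)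

lemma abs_le_Linf_norm:
  fixes f :: "real^'d::finite \<Rightarrow> real"
  assumes "continuous_on UNIV f" "x \<in> torus_box"
  shows "\<bar>f x\<bar> \<le> Linf_norm f"
proof -
  have "compact ((\<lambda>x. \<bar>f x\<bar>) ` torus_box)"
    using assms(1) by (intro compact_continuous_image compact_torus_box)
      (auto intro!: continuous_intros intro: continuous_on_subset)
  then show ?thesis
    unfolding Linf_norm_def
    by (intro cSUP_upper assms(2) bounded_imp_bdd_above compact_imp_bounded)
qed

lemma Linf_norm_nonneg:
  fixes f :: "real^'d::finite \<Rightarrow> real"
  assumes "continuous_on UNIV f"
  shows "0 \<le> Linf_norm f"
proof -
  have "(0 :: real^'d) \<in> torus_box"
    by (simp add: torus_box_def)
  from abs_le_Linf_norm[OF assms this] show ?thesis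
    by linarith
qed

lemma Lp_norm_2_powr:
  fixes f :: "real^'d::finite \<Rightarrow> real"
  shows "Lp_norm 2 f powr r = torus_int (\<lambda>x. (f x)\<^sup>2) powr (r / 2)"
  unfolding Lp_norm_def by (simp add: powr_powr)

lemma powr_inverse_power: "0 \<le> (x::real) \<Longrightarrow> 0 < n \<Longrightarrow> (x powr (1 / real n)) ^ n = x"
  by (cases "x = 0") (auto simp: powr_power)

lemma Lp_norm_2_power2:
  fixes f :: "real^'d::finite \<Rightarrow> real"
  assumes "continuous_on UNIV f"
  shows "Lp_norm 2 f ^ 2 = torus_int (\<lambda>x. (f x)\<^sup>2)"
proof -
  have "0 \<le> torus_int (\<lambda>x. (f x)\<^sup>2)"
    by (rule torus_int_nonneg) (auto intro!: continuous_intros assms)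
  from powr_inverse_power[OF this, of 2] show ?thesis
    unfolding Lp_norm_def by simp
qed

lemma Lp_norm_4_power4:
  fixes f :: "real^'d::finite \<Rightarrow> real"
  assumes "continuous_on UNIV f"
  shows "Lp_norm 4 f ^ 4 = torus_int (\<lambda>x. (f x) ^ 4)"
proof -
  have "0 \<le> torus_int (\<lambda>x. (f x) ^ 4)"
    by (rule torus_int_nonneg) (auto intro!: continuous_intros assms)
  from powr_inverse_power[OF this, of 4] show ?thesis
    unfolding Lp_norm_def by (simp add: power_even_abs)
qed

section \<open>Trigonometric polynomials\<close>

lemma has_vector_derivative_cis_mult:
  fixes c :: real
  assumes "c \<noteq> 0"
  shows "((\<lambda>t. cis (c * t) / (\<i> * c)) has_vector_derivative cis (c * t)) (at t within S)"
proof -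
  have "((\<lambda>z. exp (\<i> * c * z) / (\<i> * c)) has_field_derivative exp (\<i> * c * t)) (at (of_real t))"
    using assms by (auto intro!: derivative_eq_intros)
  from has_vector_derivative_real_field[OF this]
  show ?thesis
    by (simp add: cis_conv_exp mult.assoc)
qed

lemma set_integral_cis_int:
  fixes m :: int
  shows "set_lebesgue_integral lborel {0..2*pi} (\<lambda>t. cis (of_int m * t))
    = (if m = 0 then complex_of_real (2*pi) else 0)"
proof (cases "m = 0")
  case True
  then show ?thesis by (simp add: set_integral_const scaleR_conv_of_real)
next
  case False
  have "set_lebesgue_integral lborel {0..2*pi} (\<lambda>t. cis (of_int m * t))
      = (LBINT t=ereal 0..ereal (2*pi). cis (of_int m * t))"
    by (simp add: interval_integral_Icc)
  also have "\<dots> = cis (of_int m * (2*pi)) / (\<i> * of_int m) - cis (of_int m * 0) / (\<i> * of_int m)"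
    by (rule interval_integral_FTC_finite)
      (use False has_vector_derivative_cis_mult[of "of_int m"] in \<open>auto intro!: continuous_intros\<close>)
  also have "cis (of_int m * (2*pi)) = 1"
    using cis_multiple_2pi[of "of_int m"] by (simp add: mult_ac)
  finally show ?thesis using False by simp
qed

lemma en_eq_prod: "en k x = (\<Prod>i\<in>UNIV. cis (of_int (k $ i) * x $ i))"
  unfolding en_def dotp_def cis_conv_exp by (simp add: exp_sum sum_distrib_left mult_ac)

lemma torus_int_en: "torus_int (en (k::int^'d::finite)) = (if k = 0 then 1 else 0)"
proof -
  have "set_lebesgue_integral lborel (torus_box :: (real^'d) set) (en k)
      = (\<Prod>i\<in>UNIV. set_lebesgue_integral lborel {0..2*pi} (\<lambda>t. cis (of_int (k $ i) * t)))"
    unfolding en_eq_prod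
    by (rule set_integral_torus_box_prod)
       (auto simp: set_integrable_def intro!: borel_integrable_compact continuous_intros)
  also have "\<dots> = (\<Prod>i\<in>(UNIV::'d set). (if k $ i = 0 then complex_of_real (2*pi) else 0))"
    by (simp add: set_integral_cis_int)
  also have "\<dots> = (if k = 0 then complex_of_real (2*pi) ^ CARD('d) else 0)"
    by (auto simp: vec_eq_iff intro!: prod_zero)
  finally show ?thesis unfolding torus_int_def by (simp add: scaleR_conv_of_real)
qed

lemma en_uminus: "en (- n) x = cnj (en n x)"
  by (simp add: en_def dotp_def cis_cnj sum_negf)

lemma en_mult_cnj: "en n x * cnj (en m x) = en (n - m) x"
  by (simp add: en_def dotp_def cis_cnj cis_mult sum_subtractf[symmetric] algebra_simps)

lemma norm_en: "cmod (en n x) = 1"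
  by (simp add: en_def)

lemma continuous_on_en: "continuous_on UNIV (en n)"
  unfolding en_def dotp_def by (auto intro!: continuous_intros)

lemma freq_ball_subset_cube: "freq_ball N \<subseteq> {n::int^'d::finite. \<forall>i. n $ i \<in> {- int N..int N}}"
proof safe
  fix n :: "int^'d" and i
  assume "n \<in> freq_ball N"
  moreover have "(n $ i)\<^sup>2 \<le> (\<Sum>j\<in>UNIV. (n $ j)\<^sup>2)"
    by (rule member_le_sum) auto
  ultimately have "(n $ i)\<^sup>2 \<le> (int N)\<^sup>2"
    by (simp add: freq_ball_def)
  then show "n $ i \<in> {- int N..int N}"
    using abs_le_square_iff[of "n $ i" "int N"] by auto
qed

lemma cube_eq_image_PiE: "{n::'a^'d::finite. \<forall>i. n $ i \<in> K} = vec_lambda ` (PiE UNIV (\<lambda>_. K))"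
proof safe
  fix n :: "'a^'d"
  assume "\<forall>i. n $ i \<in> K"
  then show "n \<in> vec_lambda ` (PiE UNIV (\<lambda>_. K))"
    by (intro image_eqI[where x="vec_nth n"]) auto
qed auto

lemma finite_cube: "finite K \<Longrightarrow> finite {n::'a^'d::finite. \<forall>i. n $ i \<in> K}"
  unfolding cube_eq_image_PiE by (auto intro!: finite_PiE)

lemma finite_freq_ball: "finite (freq_ball N :: (int^'d::finite) set)"
  by (rule finite_subset[OF freq_ball_subset_cube finite_cube]) auto

lemma uminus_mem_freq_ball_iff: "- n \<in> freq_ball N \<longleftrightarrow> n \<in> freq_ball N"
  by (simp add: freq_ball_def)

lemma continuous_on_trig_poly: "continuous_on UNIV (trig_poly N c)"
  unfolding trig_poly_def by (auto intro!: continuous_intros continuous_on_compose2[OF continuous_on_en])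

(* Taking real parts in trig_poly replaces the coefficients by their Hermitian part, which is
   therefore the actual Fourier coefficient family of trig_poly N c. *)
definition hermitian_part :: "(int^'d::finite \<Rightarrow> complex) \<Rightarrow> int^'d \<Rightarrow> complex" where
  "hermitian_part c n = (c n + cnj (c (- n))) / 2"

lemma of_real_trig_poly:
  "complex_of_real (trig_poly N c x) = (\<Sum>n\<in>freq_ball N. hermitian_part c n * en n x)"
proof -
  have "cnj (\<Sum>n\<in>freq_ball N. c n * en n x) = (\<Sum>n\<in>freq_ball N. cnj (c n) * en (- n) x)"
    by (simp add: en_uminus)
  also have "\<dots> = (\<Sum>n\<in>freq_ball N. cnj (c (- n)) * en n x)"
    by (rule sum.reindex_bij_witness[where i=uminus and j=uminus]) (auto simp: uminus_mem_freq_ball_iff)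
  finally have "cnj (\<Sum>n\<in>freq_ball N. c n * en n x) = \<dots>" .
  moreover have of_real_Re: "complex_of_real (Re z) = (z + cnj z) / 2" for z
    by (simp add: complex_eq_iff)
  ultimately show ?thesis
    unfolding trig_poly_def hermitian_part_def of_real_Re
    by (simp add: sum.distrib[symmetric] sum_divide_distrib algebra_simps)
qed

lemma abs_trig_poly_le: "\<bar>trig_poly N c x\<bar> \<le> (\<Sum>n\<in>freq_ball N. cmod (hermitian_part c n))"
proof -
  have "\<bar>trig_poly N c x\<bar> = cmod (complex_of_real (trig_poly N c x))"
    by simp
  also have "\<dots> \<le> (\<Sum>n\<in>freq_ball N. cmod (hermitian_part c n * en n x))"
    unfolding of_real_trig_poly by (rule norm_sum)
  finally show ?thesis
    by (simp add: norm_mult norm_en)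
qed

lemma torus_int_trig_poly_square:
  "torus_int (\<lambda>x::real^'d::finite. (trig_poly N c x)\<^sup>2) = (\<Sum>n\<in>freq_ball N. (cmod (hermitian_part c n))\<^sup>2)"
proof -
  let ?F = "freq_ball N :: (int^'d) set" and ?h = "hermitian_part c"
  have square: "complex_of_real ((trig_poly N c x)\<^sup>2) =
      (\<Sum>n\<in>?F. \<Sum>m\<in>?F. (?h n * cnj (?h m)) * en (n - m) x)" for x
  proof -
    have "complex_of_real ((trig_poly N c x)\<^sup>2)
        = complex_of_real (trig_poly N c x) * cnj (complex_of_real (trig_poly N c x))"
      by (simp add: power2_eq_square)
    also have "\<dots> = (\<Sum>n\<in>?F. \<Sum>m\<in>?F. (?h n * cnj (?h m)) * (en n x * cnj (en m x)))"
      unfolding of_real_trig_poly by (simp add: sum_product algebra_simps)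
    finally show ?thesis
      by (simp add: en_mult_cnj)
  qed
  have "complex_of_real (torus_int (\<lambda>x::real^'d. (trig_poly N c x)\<^sup>2))
      = torus_int (\<lambda>x. \<Sum>n\<in>?F. \<Sum>m\<in>?F. (?h n * cnj (?h m)) * en (n - m) x)"
    by (simp only: torus_int_of_real[symmetric] square)
  also have "\<dots> = (\<Sum>n\<in>?F. \<Sum>m\<in>?F. (?h n * cnj (?h m)) * torus_int (en (n - m)))"
    by (simp add: torus_int_sum finite_freq_ball continuous_on_en torus_int_mult_left continuous_intros)
  also have "\<dots> = (\<Sum>n\<in>?F. ?h n * cnj (?h n))"
    by (simp add: torus_int_en if_distrib sum.delta finite_freq_ball cong: if_cong)
  also have "\<dots> = complex_of_real (\<Sum>n\<in>?F. (cmod (?h n))\<^sup>2)"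
    by (simp add: complex_norm_square del: of_real_power)
  finally show ?thesis
    by (simp only: of_real_eq_iff)
qed

lemma jbr_ge_1: "1 \<le> jbr n"
  unfolding jbr_def by (auto intro!: sum_nonneg)

lemma jbr_pos: "0 < jbr n"
  using jbr_ge_1[of n] by linarith

lemma jbr_uminus: "jbr (- n) = jbr n"
  unfolding jbr_def by simp

lemma hermitian_part_bessel_pot:
  "hermitian_part (bessel_pot s c) n = complex_of_real (jbr n powr s) * hermitian_part c n"
  unfolding hermitian_part_def bessel_pot_def by (simp add: jbr_uminus algebra_simps)

lemma bessel_pot_bessel_pot_uminus: "bessel_pot s (bessel_pot (- s) c) = (c :: int^'d::finite \<Rightarrow> complex)"
proof
  fix n :: "int^'d"
  have "jbr n powr s * jbr n powr (- s) = 1"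
    using jbr_pos[of n] by (simp add: powr_add[symmetric])
  then show "bessel_pot s (bessel_pot (- s) c) n = c n"
    unfolding bessel_pot_def by (simp flip: of_real_mult mult.assoc)
qed

section \<open>A lattice sum\<close>

lemma powr_diff_ge_mean_value:
  fixes y h s :: real
  assumes "0 < y" "0 < h" "1 < s"
  shows "(s - 1) * h * (y + h) powr (- s) \<le> y powr (1 - s) - (y + h) powr (1 - s)"
proof -
  have "\<And>x. y \<le> x \<Longrightarrow> x \<le> y + h \<Longrightarrow> DERIV (\<lambda>z. z powr (1 - s)) x :> (1 - s) * x powr ((1 - s) - 1)"
    using assms by (intro has_real_derivative_powr) auto
  from MVT2[of y "y + h", OF _ this] obtain z where z: "y < z" "z < y + h"
    and eq: "(y + h) powr (1 - s) - y powr (1 - s) = h * ((1 - s) * z powr (- s))"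
    using assms by auto
  have "(y + h) powr (- s) \<le> z powr (- s)"
    by (rule powr_mono2') (use assms z in auto)
  then have "(s - 1) * h * (y + h) powr (- s) \<le> (s - 1) * h * z powr (- s)"
    using assms by (intro mult_left_mono) auto
  also have "\<dots> = y powr (1 - s) - (y + h) powr (1 - s)"
    using eq by (simp add: algebra_simps)
  finally show ?thesis .
qed

lemma sum_powr_affine_le:
  fixes \<mu> s :: real
  assumes "0 < \<mu>" "1 < s"
  shows "(\<Sum>k=1..M. (1 + \<mu> * real k) powr (- s)) \<le> 1 / ((s - 1) * \<mu>)"
proof -
  define \<Phi> where "\<Phi> x = (1 + \<mu> * x) powr (1 - s) / ((s - 1) * \<mu>)" for x :: real
  have telescope: "(\<Sum>k=1..M. (1 + \<mu> * real k) powr (- s)) \<le> \<Phi> 0 - \<Phi> (real M)" for M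
  proof (induction M)
    case 0
    then show ?case by simp
  next
    case (Suc M)
    have "(s - 1) * \<mu> * (1 + \<mu> * real (Suc M)) powr (- s)
        \<le> (1 + \<mu> * real M) powr (1 - s) - (1 + \<mu> * real (Suc M)) powr (1 - s)"
      using powr_diff_ge_mean_value[of "1 + \<mu> * real M" \<mu> s] assms
      by (simp add: algebra_simps add_pos_nonneg)
    moreover have "\<Phi> (real M) - \<Phi> (real (Suc M))
        = ((1 + \<mu> * real M) powr (1 - s) - (1 + \<mu> * real (Suc M)) powr (1 - s)) / ((s - 1) * \<mu>)"
      unfolding \<Phi>_def by (simp add: diff_divide_distrib)
    ultimately have "(1 + \<mu> * real (Suc M)) powr (- s) \<le> \<Phi> (real M) - \<Phi> (real (Suc M))"
      using assms by (simp add: pos_le_divide_eq mult.commute mult.left_commute)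
    then show ?case
      using Suc by simp
  qed
  moreover have "0 \<le> \<Phi> (real M)" "\<Phi> 0 = 1 / ((s - 1) * \<mu>)"
    unfolding \<Phi>_def using assms by simp_all
  ultimately show ?thesis
    using telescope[of M] by linarith
qed

lemma one_add_square_powr_le:
  fixes s t :: real
  assumes "0 \<le> t" "0 \<le> s"
  shows "(1 + t\<^sup>2) powr (- s / 2) \<le> 2 powr (s / 2) * (1 + t) powr (- s)"
proof -
  have "(1 + t)\<^sup>2 \<le> 2 * (1 + t\<^sup>2)"
    using zero_le_power2[of "1 - t"] by (simp add: power2_eq_square algebra_simps)
  then have "((1 + t)\<^sup>2) powr (s / 2) \<le> (2 * (1 + t\<^sup>2)) powr (s / 2)"
    using assms by (intro powr_mono2) auto
  moreover have "((1 + t)\<^sup>2) powr (s / 2) = (1 + t) powr s"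
    using assms by (simp add: powr_powr flip: powr_numeral)
  ultimately have "(1 + t) powr s \<le> 2 powr (s / 2) * (1 + t\<^sup>2) powr (s / 2)"
    by (simp only: powr_mult[of 2 "1 + t\<^sup>2"])
  moreover have "0 < 1 + t\<^sup>2"
    by (intro add_pos_nonneg) auto
  moreover have "0 < 1 + t"
    using assms by simp
  ultimately show ?thesis
    by (simp add: powr_minus_divide divide_simps mult.commute)
qed

lemma sum_int_symmetric_interval:
  fixes g :: "int \<Rightarrow> 'a::comm_monoid_add"
  shows "(\<Sum>k=- int M..int M. g k) = g 0 + (\<Sum>k=1..M. g (int k) + g (- int k))"
proof (induction M)
  case 0
  then show ?case by simp
next
  case (Suc M)
  have "{- int (Suc M)..int (Suc M)} = insert (int (Suc M)) (insert (- int (Suc M)) {- int M..int M})"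
    by auto
  then show ?case
    using Suc by (simp add: ac_simps)
qed

lemma sum_int_one_add_square_powr_le:
  fixes \<mu> s :: real
  assumes "0 < \<mu>" "\<mu> \<le> 1" "1 < s"
  shows "(\<Sum>k=- int M..int M. (1 + \<mu>\<^sup>2 * (of_int k)\<^sup>2) powr (- s / 2))
    \<le> (1 + 2 * 2 powr (s / 2) / (s - 1)) / \<mu>"
proof -
  have "(\<Sum>k=- int M..int M. (1 + \<mu>\<^sup>2 * (of_int k)\<^sup>2) powr (- s / 2))
      = 1 + 2 * (\<Sum>k=1..M. (1 + (\<mu> * real k)\<^sup>2) powr (- s / 2))"
    by (subst sum_int_symmetric_interval) (simp add: sum_distrib_left power_mult_distrib)
  also have "\<dots> \<le> 1 + 2 * (\<Sum>k=1..M. 2 powr (s / 2) * (1 + \<mu> * real k) powr (- s))"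
    using assms by (intro add_left_mono mult_left_mono sum_mono one_add_square_powr_le) auto
  also have "\<dots> \<le> 1 + 2 * 2 powr (s / 2) * (1 / ((s - 1) * \<mu>))"
    using mult_left_mono[OF sum_powr_affine_le[OF assms(1,3), of M], of "2 * 2 powr (s / 2)"]
    by (simp add: sum_distrib_left mult.assoc)
  also have "\<dots> \<le> 1 / \<mu> + 2 * 2 powr (s / 2) * (1 / ((s - 1) * \<mu>))"
    using assms by simp
  finally show ?thesis
    by (simp add: add_divide_distrib)
qed

lemma sum_cube_prod:
  fixes \<phi> :: "'a \<Rightarrow> 'b::comm_semiring_1"
  assumes "finite K"
  shows "(\<Sum>n\<in>{n::'a^'d::finite. \<forall>i. n $ i \<in> K}. \<Prod>i\<in>UNIV. \<phi> (n $ i)) = (\<Sum>k\<in>K. \<phi> k) ^ CARD('d)"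
proof -
  have "inj_on vec_lambda (PiE (UNIV::'d set) (\<lambda>_. K))"
    by (auto simp: inj_on_def vec_lambda_inject)
  then have "(\<Sum>n\<in>{n::'a^'d. \<forall>i. n $ i \<in> K}. \<Prod>i\<in>UNIV. \<phi> (n $ i))
      = (\<Sum>g\<in>PiE (UNIV::'d set) (\<lambda>_. K). \<Prod>i\<in>UNIV. \<phi> (g i))"
    unfolding cube_eq_image_PiE by (simp add: sum.reindex)
  also have "\<dots> = (\<Prod>i\<in>(UNIV::'d set). \<Sum>k\<in>K. \<phi> k)"
    by (rule prod_sum_PiE[symmetric]) (use assms in auto)
  finally show ?thesis
    by simp
qed

lemma one_add_powr_le:
  fixes S \<alpha> :: real
  assumes "0 \<le> S" "0 \<le> \<alpha>"
  shows "(1 + S) powr \<alpha> \<le> 2 powr \<alpha> * (1 + S powr \<alpha>)"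
proof (cases "S \<le> 1")
  case True
  then have "(1 + S) powr \<alpha> \<le> 2 powr \<alpha>"
    using assms by (intro powr_mono2) auto
  then show ?thesis
    by (simp add: distrib_left add_increasing2)
next
  case False
  then have "(1 + S) powr \<alpha> \<le> (2 * S) powr \<alpha>"
    using assms by (intro powr_mono2) auto
  then show ?thesis
    by (simp add: powr_mult distrib_left add_increasing)
qed

lemma prod_one_add_square_powr_le:
  fixes \<alpha> lam :: real and n :: "int^'d::finite"
  assumes "0 < \<alpha>" "0 < lam"
  defines "\<mu> \<equiv> lam powr (1 / (2 * \<alpha>))"
  shows "(\<Prod>i\<in>UNIV. (1 + \<mu>\<^sup>2 * (of_int (n $ i))\<^sup>2) powr (\<alpha> / CARD('d)))
    \<le> 2 powr \<alpha> * (1 + lam * jbr n powr (2 * \<alpha>))"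
proof -
  define d where "d = real CARD('d)"
  define T where "T = (\<Sum>i\<in>UNIV. (real_of_int (n $ i))\<^sup>2)"
  define S where "S = \<mu>\<^sup>2 * (1 + T)"
  have "0 < d" "0 \<le> T" "0 < \<mu>"
    using assms by (auto simp: d_def T_def \<mu>_def intro!: sum_nonneg)
  then have "0 \<le> S"
    by (simp add: S_def)
  have weight_eq: "lam * jbr n powr (2 * \<alpha>) = S powr \<alpha>"
  proof -
    have "\<mu>\<^sup>2 powr \<alpha> = lam"
      using assms \<open>0 < \<mu>\<close> by (simp add: \<mu>_def powr_powr flip: powr_numeral)
    moreover have "jbr n powr (2 * \<alpha>) = (1 + T) powr \<alpha>"
      unfolding jbr_def T_def using \<open>0 \<le> T\<close>[unfolded T_def]
      by (simp add: powr_half_sqrt[symmetric] powr_powr)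
    ultimately show ?thesis
      using \<open>0 \<le> T\<close> by (simp add: S_def powr_mult)
  qed
  have factor_le: "1 + \<mu>\<^sup>2 * (of_int (n $ i))\<^sup>2 \<le> 1 + S" for i
  proof -
    have "(real_of_int (n $ i))\<^sup>2 \<le> 1 + T"
      unfolding T_def using member_le_sum[of i UNIV "\<lambda>i. (real_of_int (n $ i))\<^sup>2"] by simp
    then show ?thesis
      unfolding S_def by (simp add: mult_left_mono)
  qed
  have "(\<Prod>i\<in>UNIV. (1 + \<mu>\<^sup>2 * (of_int (n $ i))\<^sup>2) powr (\<alpha> / d))
      = (\<Prod>i\<in>UNIV. 1 + \<mu>\<^sup>2 * (of_int (n $ i))\<^sup>2) powr (\<alpha> / d)"
    by (rule prod_powr_distrib[symmetric])
  also have "\<dots> \<le> ((1 + S) ^ CARD('d)) powr (\<alpha> / d)"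
    using assms \<open>0 < d\<close> \<open>0 \<le> S\<close> factor_le
    by (intro powr_mono2 prod_le_power) (auto intro!: prod_nonneg add_nonneg_nonneg)
  also have "\<dots> = (1 + S) powr \<alpha>"
    using \<open>0 \<le> S\<close> \<open>0 < d\<close> by (simp add: d_def powr_realpow[symmetric] powr_powr)
  also have "\<dots> \<le> 2 powr \<alpha> * (1 + lam * jbr n powr (2 * \<alpha>))"
    unfolding weight_eq using \<open>0 \<le> S\<close> assms by (intro one_add_powr_le) auto
  finally show ?thesis
    by (simp add: d_def)
qed

(* Dominating the weight by a product of one-dimensional weights turns the lattice sum below into
   a power of a sum over the integers. *)
lemma inverse_weight_le_prod:
  fixes \<alpha> lam :: real and n :: "int^'d::finite"
  assumes "0 < \<alpha>" "0 < lam"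
  defines "\<mu> \<equiv> lam powr (1 / (2 * \<alpha>))"
  shows "1 / (1 + lam * jbr n powr (2 * \<alpha>))
    \<le> 2 powr \<alpha> * (\<Prod>i\<in>UNIV. (1 + \<mu>\<^sup>2 * (of_int (n $ i))\<^sup>2) powr (- \<alpha> / CARD('d)))"
proof -
  define P where "P = (\<Prod>i\<in>UNIV. (1 + \<mu>\<^sup>2 * (of_int (n $ i))\<^sup>2) powr (\<alpha> / CARD('d)))"
  have "P \<le> 2 powr \<alpha> * (1 + lam * jbr n powr (2 * \<alpha>))"
    unfolding P_def \<mu>_def by (rule prod_one_add_square_powr_le[OF assms(1,2)])
  moreover have "0 < P"
    unfolding P_def by (intro prod_pos) (simp add: add_pos_nonneg less_imp_neq[symmetric])
  moreover have "0 < 1 + lam * jbr n powr (2 * \<alpha>)"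
    using assms by (intro add_pos_nonneg) auto
  ultimately have "1 / (1 + lam * jbr n powr (2 * \<alpha>)) \<le> 2 powr \<alpha> / P"
    by (simp add: divide_simps mult.commute)
  also have "\<dots> = 2 powr \<alpha> * (\<Prod>i\<in>UNIV. (1 + \<mu>\<^sup>2 * (of_int (n $ i))\<^sup>2) powr (- \<alpha> / CARD('d)))"
    unfolding P_def by (simp add: powr_minus_divide prod_dividef)
  finally show ?thesis .
qed

lemma sum_freq_ball_inverse_weight_le:
  fixes \<alpha> :: real
  assumes "real CARD('d::finite) / 2 < \<alpha>"
  obtains C where "C > 0" and "\<And>lam N. 0 < lam \<Longrightarrow> lam \<le> 1 \<Longrightarrow>
     (\<Sum>n\<in>(freq_ball N :: (int^'d) set). 1 / (1 + lam * jbr n powr (2 * \<alpha>)))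
       \<le> C * lam powr (- (real CARD('d) / (2 * \<alpha>)))"
proof -
  define d where "d = real CARD('d)"
  have "0 < d" "0 < \<alpha>"
    using assms by (auto simp: d_def)
  define s where "s = 2 * \<alpha> / d"
  have "1 < s"
    using assms \<open>0 < d\<close> by (simp add: s_def d_def field_simps)
  define C1 where "C1 = 1 + 2 * 2 powr (s / 2) / (s - 1)"
  have "0 < C1"
    using \<open>1 < s\<close> by (simp add: C1_def add_pos_nonneg)
  show ?thesis
  proof
    show "0 < 2 powr \<alpha> * C1 ^ CARD('d)"
      using \<open>0 < C1\<close> by simp
    fix lam :: real and N
    assume lam: "0 < lam" "lam \<le> 1"
    define \<mu> where "\<mu> = lam powr (1 / (2 * \<alpha>))"
    have "0 < \<mu>" "\<mu> \<le> 1"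
      using lam \<open>0 < \<alpha>\<close> by (auto simp: \<mu>_def intro: powr_le1)
    define \<phi> where "\<phi> k = (1 + \<mu>\<^sup>2 * (of_int k)\<^sup>2) powr (- s / 2)" for k :: int
    let ?cube = "{n::int^'d. \<forall>i. n $ i \<in> {- int N..int N}}"
    have "(\<Sum>n\<in>(freq_ball N :: (int^'d) set). 1 / (1 + lam * jbr n powr (2 * \<alpha>)))
        \<le> (\<Sum>n\<in>(freq_ball N :: (int^'d) set). 2 powr \<alpha> * (\<Prod>i\<in>UNIV. \<phi> (n $ i)))"
      by (rule sum_mono)
        (use inverse_weight_le_prod[OF \<open>0 < \<alpha>\<close> lam(1)] in \<open>simp add: \<phi>_def \<mu>_def s_def d_def\<close>)
    also have "\<dots> \<le> (\<Sum>n\<in>?cube. 2 powr \<alpha> * (\<Prod>i\<in>UNIV. \<phi> (n $ i)))"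
      by (intro sum_mono2 finite_cube freq_ball_subset_cube)
        (auto simp: \<phi>_def intro!: mult_nonneg_nonneg prod_nonneg)
    also have "\<dots> = 2 powr \<alpha> * (\<Sum>k=- int N..int N. \<phi> k) ^ CARD('d)"
      by (simp only: sum_distrib_left[symmetric] sum_cube_prod[OF finite_atLeastAtMost_int])
    also have "\<dots> \<le> 2 powr \<alpha> * (C1 / \<mu>) ^ CARD('d)"
      using sum_int_one_add_square_powr_le[OF \<open>0 < \<mu>\<close> \<open>\<mu> \<le> 1\<close> \<open>1 < s\<close>, of N]
      by (intro mult_left_mono power_mono) (auto simp: \<phi>_def C1_def intro!: sum_nonneg)
    also have "\<dots> = 2 powr \<alpha> * C1 ^ CARD('d) * lam powr (- (real CARD('d) / (2 * \<alpha>)))"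
      using lam by (simp add: \<mu>_def power_divide powr_power powr_minus_divide)
    finally show "(\<Sum>n\<in>(freq_ball N :: (int^'d) set). 1 / (1 + lam * jbr n powr (2 * \<alpha>)))
        \<le> 2 powr \<alpha> * C1 ^ CARD('d) * lam powr (- (real CARD('d) / (2 * \<alpha>)))" .
  qed
qed

section \<open>An interpolation inequality\<close>

lemma sum_mult_square_le_weighted:
  fixes b v :: "'a \<Rightarrow> real"
  assumes "0 < lam"
  shows "(\<Sum>n\<in>F. b n * v n)\<^sup>2
    \<le> ((\<Sum>n\<in>F. (b n * v n)\<^sup>2) + lam * (\<Sum>n\<in>F. (b n)\<^sup>2)) * (\<Sum>n\<in>F. (v n)\<^sup>2 / ((v n)\<^sup>2 + lam))"
proof -
  have pos: "0 < (v n)\<^sup>2 + lam" for n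
    using assms by (simp add: add_nonneg_pos)
  have "(\<Sum>n\<in>F. b n * v n)\<^sup>2 = (\<Sum>n\<in>F. (b n * sqrt ((v n)\<^sup>2 + lam)) * (v n / sqrt ((v n)\<^sup>2 + lam)))\<^sup>2"
    using pos by (intro arg_cong[where f = "\<lambda>x. x\<^sup>2"] sum.cong) (auto simp: less_imp_neq[symmetric])
  also have "\<dots> \<le> (\<Sum>n\<in>F. (b n * sqrt ((v n)\<^sup>2 + lam))\<^sup>2) * (\<Sum>n\<in>F. (v n / sqrt ((v n)\<^sup>2 + lam))\<^sup>2)"
    by (rule Cauchy_Schwarz_ineq_sum)
  also have "(\<Sum>n\<in>F. (b n * sqrt ((v n)\<^sup>2 + lam))\<^sup>2) = (\<Sum>n\<in>F. (b n * v n)\<^sup>2) + lam * (\<Sum>n\<in>F. (b n)\<^sup>2)"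
    using pos by (simp add: power_mult_distrib algebra_simps less_imp_le sum.distrib sum_distrib_left)
  also have "(\<Sum>n\<in>F. (v n / sqrt ((v n)\<^sup>2 + lam))\<^sup>2) = (\<Sum>n\<in>F. (v n)\<^sup>2 / ((v n)\<^sup>2 + lam))"
    using pos by (intro sum.cong refl) (simp add: power_divide less_imp_le)
  finally show ?thesis .
qed

(* The weighted Cauchy-Schwarz inequality with lam chosen to balance its two sums. *)
lemma sum_mult_square_le_interpolation:
  fixes b v :: "'a \<Rightarrow> real" and C \<theta> :: real
  assumes "finite F"
    and v: "\<And>n. n \<in> F \<Longrightarrow> 0 < v n" "\<And>n. n \<in> F \<Longrightarrow> v n \<le> 1"
    and "0 < \<theta>"
    and G: "\<And>lam. 0 < lam \<Longrightarrow> lam \<le> 1 \<Longrightarrow> (\<Sum>n\<in>F. (v n)\<^sup>2 / ((v n)\<^sup>2 + lam)) \<le> C * lam powr (- \<theta>)"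
  shows "(\<Sum>n\<in>F. b n * v n)\<^sup>2 \<le> 2 * C * (\<Sum>n\<in>F. (b n * v n)\<^sup>2) powr (1 - \<theta>) * (\<Sum>n\<in>F. (b n)\<^sup>2) powr \<theta>"
proof -
  define P where "P = (\<Sum>n\<in>F. (b n * v n)\<^sup>2)"
  define Q where "Q = (\<Sum>n\<in>F. (b n)\<^sup>2)"
  have "P \<le> Q"
    unfolding P_def Q_def
  proof (intro sum_mono)
    fix n
    assume "n \<in> F"
    then have "(v n)\<^sup>2 \<le> 1"
      using v by (simp add: power_le_one less_imp_le)
    then show "(b n * v n)\<^sup>2 \<le> (b n)\<^sup>2"
      by (simp add: power_mult_distrib mult_left_le)
  qed
  show ?thesis
  proof (cases "P = 0")
    case True
    then have "\<forall>n\<in>F. b n * v n = 0"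
      using \<open>finite F\<close> by (simp add: P_def sum_nonneg_eq_0_iff)
    then have "(\<Sum>n\<in>F. b n * v n) = 0"
      by (rule sum.neutral)
    then show ?thesis
      using True by (simp add: P_def)
  next
    case False
    moreover have "0 \<le> P"
      unfolding P_def by (intro sum_nonneg) simp
    ultimately have "0 < P" "0 < Q"
      using \<open>P \<le> Q\<close> by linarith+
    define lam where "lam = P / Q"
    have lam: "0 < lam" "lam \<le> 1"
      unfolding lam_def using \<open>0 < P\<close> \<open>0 < Q\<close> \<open>P \<le> Q\<close> by auto
    have "(\<Sum>n\<in>F. b n * v n)\<^sup>2 \<le> (P + lam * Q) * (\<Sum>n\<in>F. (v n)\<^sup>2 / ((v n)\<^sup>2 + lam))"
      unfolding P_def Q_def by (rule sum_mult_square_le_weighted[OF lam(1)])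
    also have "\<dots> \<le> (P + lam * Q) * (C * lam powr (- \<theta>))"
      using G[OF lam] \<open>0 < P\<close> \<open>0 < Q\<close> lam by (intro mult_left_mono) auto
    also have "\<dots> = 2 * C * P powr (1 - \<theta>) * Q powr \<theta>"
      using \<open>0 < P\<close> \<open>0 < Q\<close>
      by (simp add: lam_def powr_divide powr_minus_divide powr_diff field_simps)
    finally show ?thesis
      unfolding P_def Q_def .
  qed
qed

lemma jbr_powr_square_ratio:
  assumes "0 < lam"
  shows "(jbr n powr (- \<alpha>))\<^sup>2 / ((jbr n powr (- \<alpha>))\<^sup>2 + lam) = 1 / (1 + lam * jbr n powr (2 * \<alpha>))"
proof -
  have "(jbr n powr (- \<alpha>))\<^sup>2 = jbr n powr (- (2 * \<alpha>))"
    using jbr_pos[of n] by (subst powr_power) auto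
  then have square: "(jbr n powr (- \<alpha>))\<^sup>2 = 1 / jbr n powr (2 * \<alpha>)"
    by (simp add: powr_minus_divide)
  have "0 < jbr n powr (2 * \<alpha>)"
    using jbr_pos[of n] by simp
  then show ?thesis
    unfolding square using assms by (simp add: field_simps add_pos_pos)
qed

lemma trig_poly_square_le_interpolation:
  fixes \<alpha> :: real
  assumes "real CARD('d::finite) / 2 < \<alpha>"
  defines "\<theta> \<equiv> real CARD('d) / (2 * \<alpha>)"
  obtains C where "0 < C" and "\<And>N (D :: int^'d \<Rightarrow> complex) x.
    (trig_poly N (bessel_pot (- \<alpha>) D) x)\<^sup>2
      \<le> C * torus_int (\<lambda>x. (trig_poly N (bessel_pot (- \<alpha>) D) x)\<^sup>2) powr (1 - \<theta>)
          * torus_int (\<lambda>x. (trig_poly N D x)\<^sup>2) powr \<theta>"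
proof -
  obtain C where "0 < C" and lattice_sum: "\<And>lam N. 0 < lam \<Longrightarrow> lam \<le> 1 \<Longrightarrow>
     (\<Sum>n\<in>(freq_ball N :: (int^'d) set). 1 / (1 + lam * jbr n powr (2 * \<alpha>))) \<le> C * lam powr (- \<theta>)"
    using sum_freq_ball_inverse_weight_le[OF assms(1)] unfolding \<theta>_def by blast
  have "0 < real CARD('d) / 2"
    by simp
  with assms(1) have "0 < \<alpha>"
    by linarith
  then have "0 < \<theta>"
    by (simp add: \<theta>_def)
  show ?thesis
  proof
    show "0 < 2 * C"
      using \<open>0 < C\<close> by simp
    fix N and D :: "int^'d \<Rightarrow> complex" and x :: "real^'d"
    define b where "b n = cmod (hermitian_part D n)" for n
    define v where "v n = jbr n powr (- \<alpha>)" for n :: "int^'d"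
    have v: "0 < v n" "v n \<le> 1" for n
      using jbr_ge_1[of n] \<open>0 < \<alpha>\<close> by (auto simp: v_def powr_minus_divide ge_one_powr_ge_zero)
    have coeff: "cmod (hermitian_part (bessel_pot (- \<alpha>) D) n) = b n * v n" for n
      by (simp add: hermitian_part_bessel_pot b_def v_def norm_mult)
    have weights: "(\<Sum>n\<in>freq_ball N. (v n)\<^sup>2 / ((v n)\<^sup>2 + lam)) \<le> C * lam powr (- \<theta>)"
      if "0 < lam" "lam \<le> 1" for lam
      using lattice_sum[OF that, of N] that by (simp add: v_def jbr_powr_square_ratio)
    have "(trig_poly N (bessel_pot (- \<alpha>) D) x)\<^sup>2 \<le> (\<Sum>n\<in>freq_ball N. b n * v n)\<^sup>2"
      using abs_trig_poly_le[of N "bessel_pot (- \<alpha>) D" x]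
      by (simp add: coeff abs_le_square_iff[symmetric] power2_abs)
    also have "\<dots> \<le> 2 * C * (\<Sum>n\<in>freq_ball N. (b n * v n)\<^sup>2) powr (1 - \<theta>) * (\<Sum>n\<in>freq_ball N. (b n)\<^sup>2) powr \<theta>"
      using v \<open>0 < \<theta>\<close> weights
      by (intro sum_mult_square_le_interpolation finite_freq_ball) (auto simp: b_def)
    also have "\<dots> = 2 * C * torus_int (\<lambda>x. (trig_poly N (bessel_pot (- \<alpha>) D) x)\<^sup>2) powr (1 - \<theta>)
        * torus_int (\<lambda>x. (trig_poly N D x)\<^sup>2) powr \<theta>"
      by (simp add: torus_int_trig_poly_square coeff b_def)
    finally show "(trig_poly N (bessel_pot (- \<alpha>) D) x)\<^sup>2 \<le> \<dots>" .
  qed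
qed

section \<open>The estimates\<close>

lemma abs_cube_mult_le:
  fixes y t L :: real
  assumes "\<bar>y\<bar> \<le> L"
  shows "\<bar>y ^ 3 * t\<bar> \<le> 25 * L ^ 6 + 1 / 100 * t\<^sup>2"
proof -
  have "\<bar>y ^ 3 * t\<bar> \<le> L ^ 3 * \<bar>t\<bar>"
    using assms by (simp add: abs_mult power_abs mult_right_mono power_mono)
  also have "\<dots> \<le> 25 * L ^ 6 + 1 / 100 * t\<^sup>2"
    using zero_le_power2[of "5 * L ^ 3 - \<bar>t\<bar> / 10"]
    by (simp add: power2_eq_square algebra_simps)
  finally show ?thesis .
qed

lemma abs_mult_cube_le:
  fixes y t L :: real
  assumes "\<bar>y\<bar> \<le> L"
  shows "\<bar>y * t ^ 3\<bar> \<le> 10^6 * L ^ 4 + 1 / 100 * t ^ 4"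
proof -
  have "0 \<le> L"
    using assms by linarith
  have "\<bar>y * t ^ 3\<bar> \<le> L * \<bar>t\<bar> ^ 3"
    using assms by (simp add: abs_mult power_abs mult_right_mono)
  also have "\<dots> \<le> 10^6 * L ^ 4 + 1 / 100 * t ^ 4"
  proof (cases "100 * L \<le> \<bar>t\<bar>")
    case True
    then have "L * \<bar>t\<bar> ^ 3 \<le> \<bar>t\<bar> / 100 * \<bar>t\<bar> ^ 3"
      by (intro mult_right_mono) auto
    also have "\<dots> = 1 / 100 * t ^ 4"
      by (simp add: power_even_abs flip: power_Suc)
    moreover have "0 \<le> 10^6 * L ^ 4"
      using \<open>0 \<le> L\<close> by simp
    ultimately show ?thesis
      by linarith
  next
    case False
    then have "L * \<bar>t\<bar> ^ 3 \<le> L * (100 * L) ^ 3"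
      using \<open>0 \<le> L\<close> by (intro mult_left_mono power_mono) auto
    also have "\<dots> = 10^6 * L ^ 4"
      by (simp add: power_mult_distrib power3_eq_cube power4_eq_xxxx)
    finally show ?thesis
      by (simp add: zero_le_even_power add_increasing2)
  qed
  finally show ?thesis .
qed

lemma torus_int_cube_mult_le:
  fixes f g :: "real^'d::finite \<Rightarrow> real"
  assumes "continuous_on UNIV f" "continuous_on UNIV g" "25 \<le> c"
  shows "\<bar>torus_int (\<lambda>x. f x ^ 3 * g x)\<bar> \<le> c * Linf_norm f ^ 6 + 1 / 100 * Lp_norm 2 g ^ 2"
proof -
  let ?L = "Linf_norm f"
  have "\<bar>torus_int (\<lambda>x. f x ^ 3 * g x)\<bar> \<le> torus_int (\<lambda>x. c * ?L ^ 6 + 1 / 100 * (g x)\<^sup>2)"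
  proof (rule torus_int_abs_le)
    fix x :: "real^'d"
    assume "x \<in> torus_box"
    then have "\<bar>f x ^ 3 * g x\<bar> \<le> 25 * ?L ^ 6 + 1 / 100 * (g x)\<^sup>2"
      using abs_le_Linf_norm[OF assms(1)] by (intro abs_cube_mult_le)
    also have "\<dots> \<le> c * ?L ^ 6 + 1 / 100 * (g x)\<^sup>2"
      using assms(3) by (simp add: mult_right_mono)
    finally show "\<bar>f x ^ 3 * g x\<bar> \<le> c * ?L ^ 6 + 1 / 100 * (g x)\<^sup>2" .
  qed (auto intro!: continuous_intros assms)
  also have "\<dots> = c * ?L ^ 6 + 1 / 100 * Lp_norm 2 g ^ 2"
    by (subst torus_int_affine) (simp_all add: Lp_norm_2_power2 continuous_intros assms)
  finally show ?thesis .
qed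

lemma torus_int_square_mult_square_le:
  fixes f g :: "real^'d::finite \<Rightarrow> real"
  assumes "continuous_on UNIV f" "continuous_on UNIV g" "25 \<le> c"
  shows "\<bar>torus_int (\<lambda>x. f x ^ 2 * g x ^ 2)\<bar> \<le> c * Linf_norm f ^ 4 + 1 / 100 * Lp_norm 2 g ^ 4"
proof -
  let ?L = "Linf_norm f" and ?P = "Lp_norm 2 g ^ 2"
  have "\<bar>torus_int (\<lambda>x. f x ^ 2 * g x ^ 2)\<bar> \<le> torus_int (\<lambda>x. ?L\<^sup>2 * (g x)\<^sup>2)"
  proof (rule torus_int_abs_le)
    fix x :: "real^'d"
    assume "x \<in> torus_box"
    then have "(f x)\<^sup>2 \<le> ?L\<^sup>2"
      using abs_le_Linf_norm[OF assms(1)] Linf_norm_nonneg[OF assms(1)]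
      by (simp add: abs_le_square_iff[symmetric])
    then show "\<bar>f x ^ 2 * g x ^ 2\<bar> \<le> ?L\<^sup>2 * (g x)\<^sup>2"
      by (simp add: abs_mult mult_right_mono)
  qed (auto intro!: continuous_intros assms)
  also have "\<dots> = ?L\<^sup>2 * ?P"
    by (simp add: torus_int_mult_left Lp_norm_2_power2 assms)
  also have "\<dots> \<le> 25 * ?L ^ 4 + 1 / 100 * ?P\<^sup>2"
    using zero_le_power2[of "5 * ?L\<^sup>2 - ?P / 10"]
    by (simp add: power2_eq_square power4_eq_xxxx algebra_simps)
  also have "\<dots> \<le> c * ?L ^ 4 + 1 / 100 * Lp_norm 2 g ^ 4"
    using assms(3) by (simp add: mult_right_mono flip: power_mult)
  finally show ?thesis .
qed

lemma torus_int_mult_cube_le: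
  fixes f g :: "real^'d::finite \<Rightarrow> real"
  assumes "continuous_on UNIV f" "continuous_on UNIV g" "10^6 \<le> c"
  shows "\<bar>torus_int (\<lambda>x. f x * g x ^ 3)\<bar> \<le> c * Linf_norm f ^ 4 + 1 / 100 * Lp_norm 4 g ^ 4"
proof -
  let ?L = "Linf_norm f"
  have "\<bar>torus_int (\<lambda>x. f x * g x ^ 3)\<bar> \<le> torus_int (\<lambda>x. c * ?L ^ 4 + 1 / 100 * g x ^ 4)"
  proof (rule torus_int_abs_le)
    fix x :: "real^'d"
    assume "x \<in> torus_box"
    then have "\<bar>f x * g x ^ 3\<bar> \<le> 10^6 * ?L ^ 4 + 1 / 100 * g x ^ 4"
      using abs_le_Linf_norm[OF assms(1)] by (intro abs_mult_cube_le)
    also have "\<dots> \<le> c * ?L ^ 4 + 1 / 100 * g x ^ 4"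
      using assms(3) by (simp add: mult_right_mono)
    finally show "\<bar>f x * g x ^ 3\<bar> \<le> c * ?L ^ 4 + 1 / 100 * g x ^ 4" .
  qed (auto intro!: continuous_intros assms)
  also have "\<dots> = c * ?L ^ 4 + 1 / 100 * Lp_norm 4 g ^ 4"
    by (subst torus_int_affine) (simp_all add: Lp_norm_4_power4 continuous_intros assms)
  finally show ?thesis .
qed

lemma torus_int_power4_le:
  fixes f :: "real^'d::finite \<Rightarrow> real"
  assumes "continuous_on UNIV f" "\<And>x. x \<in> torus_box \<Longrightarrow> (f x)\<^sup>2 \<le> K"
  shows "\<bar>torus_int (\<lambda>x. (f x) ^ 4)\<bar> \<le> K * torus_int (\<lambda>x. (f x)\<^sup>2)"
proof -
  have "\<bar>torus_int (\<lambda>x. (f x) ^ 4)\<bar> \<le> torus_int (\<lambda>x. K * (f x)\<^sup>2)"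
  proof (rule torus_int_abs_le)
    fix x :: "real^'d"
    assume "x \<in> torus_box"
    then have "(f x)\<^sup>2 * (f x)\<^sup>2 \<le> K * (f x)\<^sup>2"
      using assms(2) by (intro mult_right_mono) simp_all
    then show "\<bar>(f x) ^ 4\<bar> \<le> K * (f x)\<^sup>2"
      by (simp add: power_even_abs flip: power_add)
  qed (auto intro!: continuous_intros assms(1))
  then show ?thesis
    by (simp add: torus_int_mult_left)
qed

lemma powr_mult_powr_le_Young:
  fixes K P Q r \<theta> \<epsilon> :: real
  assumes "0 < K" "0 < \<theta>" "\<theta> < 1" "0 \<le> P" "0 \<le> Q" "0 < \<epsilon>"
  shows "K * P powr r * Q powr \<theta> \<le> \<epsilon> * Q + (K * \<epsilon> powr (- \<theta>)) powr (1 / (1 - \<theta>)) * P powr (r / (1 - \<theta>))"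
proof (cases "P = 0 \<or> Q = 0")
  case True
  then show ?thesis
    using assms by auto
next
  case False
  then have "0 < P" "0 < Q"
    using assms by auto
  define Y where "Y = (K * \<epsilon> powr (- \<theta>) * P powr r) powr (1 / (1 - \<theta>))"
  have "0 < Y"
    unfolding Y_def using assms \<open>0 < P\<close> by simp
  have "Y powr (1 - \<theta>) = K * \<epsilon> powr (- \<theta>) * P powr r"
    unfolding Y_def using assms \<open>0 < P\<close> by (simp add: powr_powr)
  then have "K * P powr r * Q powr \<theta> = (\<epsilon> * Q) powr \<theta> * Y powr (1 - \<theta>)"
    using assms \<open>0 < Q\<close> by (simp add: powr_mult powr_minus field_simps)
  also have "\<dots> \<le> \<theta> * (\<epsilon> * Q) + (1 - \<theta>) * Y"
    using assms \<open>0 < Q\<close> \<open>0 < Y\<close> by (intro Youngs_inequality_0) auto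
  also have "\<dots> \<le> \<epsilon> * Q + Y"
    using assms \<open>0 < Q\<close> \<open>0 < Y\<close>
    by (intro add_mono mult_left_le_one_le) (auto intro: mult_nonneg_nonneg)
  also have "Y = (K * \<epsilon> powr (- \<theta>)) powr (1 / (1 - \<theta>)) * P powr (r / (1 - \<theta>))"
    unfolding Y_def using assms \<open>0 < P\<close> by (simp add: powr_mult powr_powr)
  finally show ?thesis .
qed

lemma torus_int_Theta_power4_le:
  fixes \<alpha> :: real
  assumes "real CARD('d::finite) / 2 < \<alpha>"
  obtains A0 where "\<And>A N (D :: int^'d \<Rightarrow> complex). A0 \<le> A \<Longrightarrow>
    \<bar>torus_int (\<lambda>x. (trig_poly N (bessel_pot (- \<alpha>) D) x) ^ 4)\<bar>
      \<le> 1 / 100 * Hs_norm_tp \<alpha> N (bessel_pot (- \<alpha>) D) ^ 2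
        + A / 100 * Lp_norm 2 (trig_poly N (bessel_pot (- \<alpha>) D))
            powr ((8 * \<alpha> - 2 * real CARD('d)) / (2 * \<alpha> - real CARD('d)))"
proof -
  define d where "d = real CARD('d)"
  define \<theta> where "\<theta> = d / (2 * \<alpha>)"
  have "0 < d" "d < 2 * \<alpha>"
    using assms by (simp_all add: d_def)
  then have "0 < \<theta>" "\<theta> < 1"
    by (simp_all add: \<theta>_def)
  obtain C where "0 < C" and interpolation: "\<And>N (D :: int^'d \<Rightarrow> complex) x.
    (trig_poly N (bessel_pot (- \<alpha>) D) x)\<^sup>2
      \<le> C * torus_int (\<lambda>x. (trig_poly N (bessel_pot (- \<alpha>) D) x)\<^sup>2) powr (1 - \<theta>)
          * torus_int (\<lambda>x. (trig_poly N D x)\<^sup>2) powr \<theta>"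
    using trig_poly_square_le_interpolation[OF assms] unfolding \<theta>_def d_def by blast
  define A0 where "A0 = 100 * (C * (1 / 100) powr (- \<theta>)) powr (1 / (1 - \<theta>))"
  have "\<bar>torus_int (\<lambda>x. (trig_poly N (bessel_pot (- \<alpha>) D) x) ^ 4)\<bar>
      \<le> 1 / 100 * Hs_norm_tp \<alpha> N (bessel_pot (- \<alpha>) D) ^ 2
        + A / 100 * Lp_norm 2 (trig_poly N (bessel_pot (- \<alpha>) D)) powr ((8 * \<alpha> - 2 * d) / (2 * \<alpha> - d))"
    if "A0 \<le> A" for A N and D :: "int^'d \<Rightarrow> complex"
  proof -
    define \<Theta> where "\<Theta> = trig_poly N (bessel_pot (- \<alpha>) D)"
    define P where "P = torus_int (\<lambda>x. (\<Theta> x)\<^sup>2)"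
    define Q where "Q = torus_int (\<lambda>x. (trig_poly N D x)\<^sup>2)"
    have cont: "continuous_on UNIV \<Theta>" "continuous_on UNIV (trig_poly N D)"
      by (simp_all add: \<Theta>_def continuous_on_trig_poly)
    have "0 \<le> P" "0 \<le> Q"
      unfolding P_def Q_def by (auto intro!: torus_int_nonneg continuous_intros cont)
    have "\<bar>torus_int (\<lambda>x. (\<Theta> x) ^ 4)\<bar> \<le> (C * P powr (1 - \<theta>) * Q powr \<theta>) * P"
      unfolding P_def using interpolation[of N D] cont
      by (intro torus_int_power4_le) (simp_all add: \<Theta>_def Q_def)
    also have "\<dots> = C * P powr (2 - \<theta>) * Q powr \<theta>"
      using powr_mult_base[OF \<open>0 \<le> P\<close>, of "1 - \<theta>"] by (simp add: mult_ac)
    also have "\<dots> \<le> 1 / 100 * Q + A0 / 100 * P powr ((2 - \<theta>) / (1 - \<theta>))"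
      using powr_mult_powr_le_Young[of C \<theta> P Q "1 / 100" "2 - \<theta>"]
        \<open>0 < C\<close> \<open>0 < \<theta>\<close> \<open>\<theta> < 1\<close> \<open>0 \<le> P\<close> \<open>0 \<le> Q\<close>
      by (simp add: A0_def)
    also have "\<dots> \<le> 1 / 100 * Q + A / 100 * P powr ((2 - \<theta>) / (1 - \<theta>))"
      using that by (simp add: mult_right_mono)
    also have "Q = Hs_norm_tp \<alpha> N (bessel_pot (- \<alpha>) D) ^ 2"
      by (simp add: Hs_norm_tp_def bessel_pot_bessel_pot_uminus Lp_norm_2_power2 cont Q_def)
    also have "(2 - \<theta>) / (1 - \<theta>) = (8 * \<alpha> - 2 * d) / (2 * \<alpha> - d) / 2"
      using \<open>0 < d\<close> \<open>d < 2 * \<alpha>\<close> by (simp add: \<theta>_def field_simps)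
    finally show ?thesis
      by (simp add: Lp_norm_2_powr P_def \<Theta>_def)
  qed
  then show ?thesis
    using that unfolding d_def by blast
qed

lemma powr_ge_of_affine_lower_bound:
  fixes P I M \<gamma> \<epsilon> :: real
  assumes "0 < \<gamma>" "0 < \<epsilon>" "2 * \<epsilon> < 1" "1 / 4 \<le> (1 - 2 * \<epsilon>) powr \<gamma>"
    and "0 \<le> P" "0 \<le> M" "(1 - \<epsilon>) * P - M / \<epsilon> \<le> I"
  shows "P powr \<gamma> / 4 - (1 / \<epsilon>\<^sup>2) powr \<gamma> * M powr \<gamma> \<le> I powr \<gamma>"
proof (cases "M / \<epsilon>\<^sup>2 \<le> P")
  case True
  then have "M / \<epsilon> \<le> \<epsilon> * P"
    using assms by (simp add: field_simps power2_eq_square)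
  then have "(1 - 2 * \<epsilon>) * P \<le> I"
    using assms by (simp add: algebra_simps)
  then have "(1 - 2 * \<epsilon>) powr \<gamma> * P powr \<gamma> \<le> I powr \<gamma>"
    using assms by (simp add: powr_mult[symmetric] powr_mono2)
  moreover have "P powr \<gamma> / 4 \<le> (1 - 2 * \<epsilon>) powr \<gamma> * P powr \<gamma>"
    using mult_right_mono[OF assms(4), of "P powr \<gamma>"] by simp
  moreover have "0 \<le> (1 / \<epsilon>\<^sup>2) powr \<gamma> * M powr \<gamma>"
    by simp
  ultimately show ?thesis
    by linarith
next
  case False
  then have "P powr \<gamma> \<le> (1 / \<epsilon>\<^sup>2) powr \<gamma> * M powr \<gamma>"
    using assms by (simp add: powr_mult[symmetric] powr_mono2)
  moreover have "0 \<le> P powr \<gamma>" "0 \<le> I powr \<gamma>"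
    by simp_all
  ultimately show ?thesis
    by linarith
qed

lemma square_add_ge_affine:
  fixes y t \<epsilon> L :: real
  assumes "0 < \<epsilon>" "\<bar>y\<bar> \<le> L"
  shows "(1 - \<epsilon>) * t\<^sup>2 - L\<^sup>2 / \<epsilon> \<le> (y + t)\<^sup>2"
proof -
  have "0 \<le> \<epsilon> * (t + y / \<epsilon>)\<^sup>2"
    using assms by simp
  also have "\<dots> = \<epsilon> * t\<^sup>2 + 2 * y * t + y\<^sup>2 / \<epsilon>"
    using assms by (simp add: power2_eq_square field_simps)
  finally have "0 \<le> \<epsilon> * t\<^sup>2 + 2 * y * t + y\<^sup>2 / \<epsilon>" .
  moreover have "y\<^sup>2 / \<epsilon> \<le> L\<^sup>2 / \<epsilon>"
    using assms by (simp add: divide_right_mono abs_le_square_iff[symmetric])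
  ultimately show ?thesis
    by (simp add: power2_eq_square algebra_simps)
qed

lemma torus_int_square_add_ge:
  fixes f g :: "real^'d::finite \<Rightarrow> real"
  assumes "continuous_on UNIV f" "continuous_on UNIV g" "0 < \<epsilon>"
  shows "(1 - \<epsilon>) * torus_int (\<lambda>x. (g x)\<^sup>2) - (Linf_norm f)\<^sup>2 / \<epsilon> \<le> torus_int (\<lambda>x. (f x + g x)\<^sup>2)"
proof -
  have "(1 - \<epsilon>) * torus_int (\<lambda>x. (g x)\<^sup>2) - (Linf_norm f)\<^sup>2 / \<epsilon>
      = torus_int (\<lambda>x. - ((Linf_norm f)\<^sup>2 / \<epsilon>) + (1 - \<epsilon>) * (g x)\<^sup>2)"
    by (subst torus_int_affine) (auto intro!: continuous_intros assms)
  also have "\<dots> \<le> torus_int (\<lambda>x. (f x + g x)\<^sup>2)"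
  proof (rule torus_int_mono)
    show "- ((Linf_norm f)\<^sup>2 / \<epsilon>) + (1 - \<epsilon>) * (g x)\<^sup>2 \<le> (f x + g x)\<^sup>2" if "x \<in> torus_box" for x
      using square_add_ge_affine[OF assms(3) abs_le_Linf_norm[OF assms(1) that]] by simp
  qed (auto intro!: continuous_intros assms)
  finally show ?thesis .
qed

lemma torus_int_square_add_powr_ge:
  fixes A \<gamma> :: real
  assumes "0 < A" "0 < \<gamma>"
  obtains c where "0 < c" and "\<And>f g :: real^'d::finite \<Rightarrow> real.
    continuous_on UNIV f \<Longrightarrow> continuous_on UNIV g \<Longrightarrow>
    A / 4 * Lp_norm 2 g powr (2 * \<gamma>) - c * Linf_norm f powr (2 * \<gamma>)
      \<le> A * torus_int (\<lambda>x. (f x + g x)\<^sup>2) powr \<gamma>"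
proof
  define q :: real where "q = 4 powr (- 1 / \<gamma>)"
  define \<epsilon> where "\<epsilon> = (1 - q) / 2"
  have "0 < q" "q < 1"
    using assms by (auto simp: q_def powr_less_one)
  then have "0 < \<epsilon>" "2 * \<epsilon> < 1"
    by (auto simp: \<epsilon>_def)
  have "1 - 2 * \<epsilon> = q"
    by (simp add: \<epsilon>_def field_simps)
  moreover have "q powr \<gamma> = 4 powr (- 1)"
    using assms unfolding q_def by (subst powr_powr) simp
  ultimately have "(1 - 2 * \<epsilon>) powr \<gamma> = 1 / 4"
    by (simp add: powr_minus_divide)
  show "0 < A * (1 / \<epsilon>\<^sup>2) powr \<gamma>"
    using assms \<open>0 < \<epsilon>\<close> by simp
  fix f g :: "real^'d \<Rightarrow> real"
  assume cont: "continuous_on UNIV f" "continuous_on UNIV g"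
  define L where "L = Linf_norm f"
  define P where "P = torus_int (\<lambda>x. (g x)\<^sup>2)"
  have "0 \<le> P"
    unfolding P_def by (rule torus_int_nonneg) (auto intro!: continuous_intros cont)
  then have "P powr \<gamma> / 4 - (1 / \<epsilon>\<^sup>2) powr \<gamma> * (L\<^sup>2) powr \<gamma> \<le> torus_int (\<lambda>x. (f x + g x)\<^sup>2) powr \<gamma>"
    using assms \<open>0 < \<epsilon>\<close> \<open>2 * \<epsilon> < 1\<close> \<open>(1 - 2 * \<epsilon>) powr \<gamma> = 1 / 4\<close>
      torus_int_square_add_ge[OF cont \<open>0 < \<epsilon>\<close>]
    by (intro powr_ge_of_affine_lower_bound) (auto simp: L_def P_def)
  from mult_left_mono[OF this, of A] assms(1)
  have "A / 4 * P powr \<gamma> - A * (1 / \<epsilon>\<^sup>2) powr \<gamma> * (L\<^sup>2) powr \<gamma>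
      \<le> A * torus_int (\<lambda>x. (f x + g x)\<^sup>2) powr \<gamma>"
    by (simp add: algebra_simps)
  moreover have "Linf_norm f powr (2 * \<gamma>) = (L\<^sup>2) powr \<gamma>"
    using Linf_norm_nonneg[OF cont(1)] by (simp add: L_def powr_powr flip: powr_numeral)
  ultimately show "A / 4 * Lp_norm 2 g powr (2 * \<gamma>) - A * (1 / \<epsilon>\<^sup>2) powr \<gamma> * Linf_norm f powr (2 * \<gamma>)
      \<le> A * torus_int (\<lambda>x. (f x + g x)\<^sup>2) powr \<gamma>"
    by (simp add: Lp_norm_2_powr P_def)
qed

theorem lemmaB1:
  fixes \<alpha> :: real
  shows "(real CARD('d::finite) / 2 < \<alpha> \<longrightarrow>
     (\<exists>c>0. \<exists>A0. \<forall>A\<ge>A0. \<forall>(N::nat) (b :: int ^ 'd \<Rightarrow> complex) (\<theta> :: real \<Rightarrow> real ^ 'd \<Rightarrow> real).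
        hermitian b \<and> drift_path \<theta> \<longrightarrow>
        (let Y = Y_N \<alpha> N b; \<Theta> = Theta_N \<alpha> N \<theta> in
          \<bar>torus_int (\<lambda>x. (Y x) ^ 3 * \<Theta> x)\<bar>
             \<le> c * Linf_norm Y ^ 6 + 1 / 100 * Lp_norm 2 \<Theta> ^ 2
        \<and> \<bar>torus_int (\<lambda>x. (Y x) ^ 2 * (\<Theta> x) ^ 2)\<bar>
             \<le> c * Linf_norm Y ^ 4 + 1 / 100 * Lp_norm 2 \<Theta> ^ 4
        \<and> \<bar>torus_int (\<lambda>x. Y x * (\<Theta> x) ^ 3)\<bar>
             \<le> c * Linf_norm Y ^ 4 + 1 / 100 * Lp_norm 4 \<Theta> ^ 4
        \<and> \<bar>torus_int (\<lambda>x. (\<Theta> x) ^ 4)\<bar>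
             \<le> 1 / 100 * Hs_norm_tp \<alpha> N (Theta_coeff \<alpha> \<theta>) ^ 2
                + A / 100 * Lp_norm 2 \<Theta> powr ((8 * \<alpha> - 2 * real CARD('d)) / (2 * \<alpha> - real CARD('d))))))
   \<and> (\<forall>A>0. \<forall>\<gamma>>0. \<exists>c>0. \<forall>(N::nat) (b :: int ^ 'd \<Rightarrow> complex) (\<theta> :: real \<Rightarrow> real ^ 'd \<Rightarrow> real).
        hermitian b \<and> drift_path \<theta> \<longrightarrow>
        (let Y = Y_N \<alpha> N b; \<Theta> = Theta_N \<alpha> N \<theta> in
          A * (torus_int (\<lambda>x. (Y x + \<Theta> x) ^ 2)) powr \<gamma>
            \<ge> A / 4 * Lp_norm 2 \<Theta> powr (2 * \<gamma>) - c * Linf_norm Y powr (2 * \<gamma>)))"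
  apply (intro conjI impI allI)
  subgoal premises \<alpha>
    unfolding Let_def Y_N_def Theta_N_def Theta_coeff_def
    apply (rule torus_int_Theta_power4_le[OF \<alpha>])
    subgoal for A0
      by (rule exI[of _ "10^6"], intro conjI exI[of _ A0] allI impI torus_int_cube_mult_le
          torus_int_square_mult_square_le torus_int_mult_cube_le continuous_on_trig_poly) simp_all
    done
  subgoal premises A_\<gamma> for A \<gamma>
    unfolding Let_def Y_N_def Theta_N_def
    by (rule torus_int_square_add_powr_ge[OF A_\<gamma>]) (blast intro: continuous_on_trig_poly)
  done

end
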